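(* Let $G=(V,E)$ be a graph and let $\alpha$ be the cardinality of a maximum independent set of $G$. For any edge weight $w$ and vertex measure $\mu$ on $G$, $$\alpha\le\min_{\sigma}\#\{k: L_k(\Gamma^\sigma)=0\},$$ where the minimum is over all signatures $\sigma:E\to\{+1,-1\}$ and $\Gamma^\sigma=(G,\sigma)$ (with the given $w$ and $\mu$).
   Context: $G=(V,E)$ is a finite undirected graph without self-loops, $V=\{1,\dots,n\}$. A signed graph $(G,\sigma)$ has signature $\sigma:E\to\{\pm1\}$, edge weight $w:E\to(0,\infty)$, vertex measure $\mu:V\to(0,\infty)$, potential $\kappa:V\to\mathbb R$. For $p\ge1$ and nonzero $f$, $\mathcal R_p^\sigma(f)=\frac{\sum_{\{i,j\}\in E}w_{ij}|f(i)-\sigma_{ij}f(j)|^p+\sum_i\kappa_i|f(i)|^p}{\sum_i\mu_i|f(i)|^p}$; $\mathcal S_p=\{f:\sum_i\mu_i|f(i)|^p=1\}$; Krasnoselskii genus $\gamma(B)$ of closed symmetric $B\subset\mathbb R^n\setminus\{0\}$: least $k$ with an odd continuous map $B\to\mathbb R^k\setminus\{0\}$; $\mathcal F_k(\mathcal S_p)$ = closed symmetric $B\subset\mathcal S_p$ with $\gamma(B)\ge k$; $\lambda_k^{(p)}=\min_{B\in\mathcal F_k(\mathcal S_p)}\max_{f\in B}\mathcal R_p^\sigma(f)$. Cut-off adjacency eigenvalues: $L_k(\Gamma):=\lim_{p\to\infty}2^{-p}\lambda_k^{(p)}(\Gamma)$, $k=1,\dots,n$ (limits exist, are nonnegative and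 independent of $\kappa$). *)

theory Defs
  imports "HOL-Analysis.Analysis"
begin

definition simple_graph :: "('v \<Rightarrow> 'v \<Rightarrow> bool) \<Rightarrow> bool" where
  "simple_graph adj \<longleftrightarrow> (\<forall>i j. adj i j \<longrightarrow> adj j i) \<and> (\<forall>i. \<not> adj i i)"

definition is_signature :: "('v \<Rightarrow> 'v \<Rightarrow> bool) \<Rightarrow> ('v \<Rightarrow> 'v \<Rightarrow> real) \<Rightarrow> bool" where
  "is_signature adj \<sigma> \<longleftrightarrow>
     (\<forall>i j. adj i j \<longrightarrow> (\<sigma> i j = 1 \<or> \<sigma> i j = -1) \<and> \<sigma> i j = \<sigma> j i)"

definition is_edge_weight :: "('v \<Rightarrow> 'v \<Rightarrow> bool) \<Rightarrow> ('v \<Rightarrow> 'v \<Rightarrow> real) \<Rightarrow> bool" where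
  "is_edge_weight adj w \<longleftrightarrow> (\<forall>i j. adj i j \<longrightarrow> w i j > 0 \<and> w i j = w j i)"

text \<open>p-Rayleigh quotient. Each undirected edge {i,j} occurs twice as an ordered
  pair, hence the factor 1/2 (the summand is symmetric in i and j).\<close>
definition rayleigh ::
  "('v::finite \<Rightarrow> 'v \<Rightarrow> bool) \<Rightarrow> ('v \<Rightarrow> 'v \<Rightarrow> real) \<Rightarrow> ('v \<Rightarrow> 'v \<Rightarrow> real)
   \<Rightarrow> ('v \<Rightarrow> real) \<Rightarrow> ('v \<Rightarrow> real) \<Rightarrow> real \<Rightarrow> real^'v \<Rightarrow> real" where
  "rayleigh adj \<sigma> w \<mu> \<kappa> p f =
     ((1/2) * (\<Sum>(i,j)\<in>{(i,j). adj i j}. w i j * \<bar>f$i - \<sigma> i j * f$j\<bar> powr p)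
      + (\<Sum>i\<in>UNIV. \<kappa> i * \<bar>f$i\<bar> powr p))
     / (\<Sum>i\<in>UNIV. \<mu> i * \<bar>f$i\<bar> powr p)"

definition sphere_p :: "('v::finite \<Rightarrow> real) \<Rightarrow> real \<Rightarrow> (real^'v) set" where
  "sphere_p \<mu> p = {f. (\<Sum>i\<in>UNIV. \<mu> i * \<bar>f$i\<bar> powr p) = 1}"

text \<open>An odd continuous map B \<rightarrow> R^k - {0}, written out componentwise.\<close>
definition genus_le :: "('a::real_normed_vector) set \<Rightarrow> nat \<Rightarrow> bool" where
  "genus_le B k \<longleftrightarrow> (\<exists>g :: nat \<Rightarrow> 'a \<Rightarrow> real.
      (\<forall>i<k. continuous_on B (g i) \<and> (\<forall>x\<in>B. g i (-x) = - g i x)) \<and>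
      (\<forall>x\<in>B. \<exists>i<k. g i x \<noteq> 0))"

definition genus :: "('a::real_normed_vector) set \<Rightarrow> nat" where
  "genus B = (LEAST k. genus_le B k)"

definition genus_family :: "('v::finite \<Rightarrow> real) \<Rightarrow> real \<Rightarrow> nat \<Rightarrow> (real^'v) set set" where
  "genus_family \<mu> p k = {B. B \<subseteq> sphere_p \<mu> p \<and> closed B \<and> (\<forall>x\<in>B. -x \<in> B) \<and> genus B \<ge> k}"

text \<open>Variational eigenvalue lambda_k^(p) (min-max; min and max are attained).\<close>
definition var_eig ::
  "('v::finite \<Rightarrow> 'v \<Rightarrow> bool) \<Rightarrow> ('v \<Rightarrow> 'v \<Rightarrow> real) \<Rightarrow> ('v \<Rightarrow> 'v \<Rightarrow> real)
   \<Rightarrow> ('v \<Rightarrow> real) \<Rightarrow> ('v \<Rightarrow> real) \<Rightarrow> real \<Rightarrow> nat \<Rightarrow> real" where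
  "var_eig adj \<sigma> w \<mu> \<kappa> p k =
     Inf ((\<lambda>B. Sup (rayleigh adj \<sigma> w \<mu> \<kappa> p ` B)) ` genus_family \<mu> p k)"

text \<open>Cut-off adjacency eigenvalue L_k = lim_{p\<rightarrow>\<infinity>} 2^{-p} lambda_k^(p).\<close>
definition cutoff_eig ::
  "('v::finite \<Rightarrow> 'v \<Rightarrow> bool) \<Rightarrow> ('v \<Rightarrow> 'v \<Rightarrow> real) \<Rightarrow> ('v \<Rightarrow> 'v \<Rightarrow> real)
   \<Rightarrow> ('v \<Rightarrow> real) \<Rightarrow> ('v \<Rightarrow> real) \<Rightarrow> nat \<Rightarrow> real" where
  "cutoff_eig adj \<sigma> w \<mu> \<kappa> k = Lim at_top (\<lambda>p. 2 powr (-p) * var_eig adj \<sigma> w \<mu> \<kappa> p k)"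

definition independent_set :: "('v \<Rightarrow> 'v \<Rightarrow> bool) \<Rightarrow> 'v set \<Rightarrow> bool" where
  "independent_set adj S \<longleftrightarrow> (\<forall>i\<in>S. \<forall>j\<in>S. \<not> adj i j)"

definition independence_number :: "('v::finite \<Rightarrow> 'v \<Rightarrow> bool) \<Rightarrow> nat" where
  "independence_number adj = Max (card ` {S. independent_set adj S})"

end

theory Submission
  imports Defs "HOL-Homology.Homology" "HOL-Real_Asymp.Real_Asymp"
begin

text \<open>
  Let S be an independent set with k vertices and consider the unit p-sphere of the coordinate
  subspace spanned by S. For f on it, every edge term \<bar>f i - \<sigma> i j * f j\<bar> powr p
  reduces to \<bar>f i\<bar> powr p or \<bar>f j\<bar> powr p, so the Rayleigh quotient is bounded there
  uniformly in p and \<sigma>. This sphere has genus k: an odd map from it to the nonzero vectors of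
  a (k - 1)-dimensional space would give, after normalisation, an odd map from the
  (k - 1)-sphere into a (k - 2)-sphere, contradicting Borsuk-Ulam. Hence the k-th variational
  eigenvalue is bounded in p, its product with 2 powr (-p) tends to 0, and the cut-off
  eigenvalues L 1, ..., L \<alpha> vanish for every signature.

  Borsuk-Ulam is reduced to the degree step Borsuk_odd_mapping_degree_step of the library by
  proving that odd self-maps of the standard spheres have odd degree. In the inductive step the
  map is moved to the unit sphere of a subspace of a Euclidean space, where Sard's lemma
  provides a homotopy to an odd map that, after a reflection, preserves the equator.
\<close>

section \<open>Odd maps of spheres in Euclidean subspaces\<close>

lemma homotopic_normalized_by_segments:
  fixes f g :: "'b::topological_space \<Rightarrow> 'a::euclidean_space"
  assumes T: "subspace T" and contf: "continuous_on X f" and contg: "continuous_on X g"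
    and seg: "\<And>x. x \<in> X \<Longrightarrow> closed_segment (f x) (g x) \<subseteq> T - {0}"
  shows "homotopic_with_canon (\<lambda>z. True) X (sphere 0 1 \<inter> T)
           (\<lambda>x. inverse (norm (f x)) *\<^sub>R f x) (\<lambda>x. inverse (norm (g x)) *\<^sub>R g x)"
proof -
  have hom: "homotopic_with_canon (\<lambda>z. True) X (T - {0}) f g"
    by (rule homotopic_with_linear [OF contf contg seg])
  have cont: "continuous_on (T - {0}) (\<lambda>y. inverse (norm y) *\<^sub>R y)"
    by (intro continuous_intros) auto
  have im: "(\<lambda>y. inverse (norm y) *\<^sub>R y) \<in> T - {0} \<rightarrow> sphere 0 1 \<inter> T"
    using T by (fastforce simp: subspace_mul)
  show ?thesis
    using homotopic_with_compose_continuous_left [OF hom cont im] by (simp add: o_def)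
qed

lemma odd_polynomial_function_approximation:
  fixes F :: "'a::euclidean_space \<Rightarrow> 'b::euclidean_space"
  assumes S: "compact S" "\<And>x. x \<in> S \<Longrightarrow> - x \<in> S"
    and contF: "continuous_on S F" and T: "subspace T" "F ` S \<subseteq> T"
    and Fodd: "\<And>x. x \<in> S \<Longrightarrow> F (- x) = - F x" and e: "e > 0"
  obtains q where "polynomial_function q" "\<And>x. q (- x) = - q x" "q ` S \<subseteq> T"
    "\<And>x. x \<in> S \<Longrightarrow> norm (F x - q x) < e"
proof -
  obtain p where pfp: "polynomial_function p" and pim: "p ` S \<subseteq> T"
      and pe: "\<And>x. x \<in> S \<Longrightarrow> norm (F x - p x) < e"
    using Stone_Weierstrass_polynomial_function_subspace [OF S(1) contF e T] by blast
  \<comment> \<open>The odd part of p approximates the odd part of F, which is F.\<close>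
  define q where "q \<equiv> \<lambda>x. (1/2) *\<^sub>R (p x - p (- x))"
  show thesis
  proof
    have "polynomial_function (p \<circ> uminus)"
      by (intro polynomial_function_compose pfp polynomial_function_minus polynomial_function_id)
    then show "polynomial_function q"
      unfolding q_def using pfp by (auto simp: o_def)
    show "q (- x) = - q x" for x
      by (simp add: q_def algebra_simps)
    show "q ` S \<subseteq> T"
      using pim S(2) T(1) unfolding q_def by (auto intro!: subspace_scale subspace_diff)
    show "norm (F x - q x) < e" if "x \<in> S" for x
    proof -
      have "F x - q x = (1/2) *\<^sub>R ((F x - p x) - (F (- x) - p (- x)))"
        using Fodd [OF that] by (simp add: q_def algebra_simps flip: scaleR_add_left)
      then have "norm (F x - q x) \<le> (1/2) * (norm (F x - p x) + norm (F (- x) - p (- x)))"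
        by (simp add: norm_triangle_ineq4)
      also have "\<dots> < e"
        using pe [OF that] pe [OF S(2) [OF that]] by simp
      finally show ?thesis .
    qed
  qed
qed

lemma homotopic_odd_differentiable_sphere_map:
  fixes F :: "'a::euclidean_space \<Rightarrow> 'a"
  assumes T: "subspace T"
    and contF: "continuous_on (sphere 0 1 \<inter> T) F"
    and Fim: "F \<in> sphere 0 1 \<inter> T \<rightarrow> sphere 0 1 \<inter> T"
    and Fodd: "\<And>x. x \<in> sphere 0 1 \<inter> T \<Longrightarrow> F (- x) = - F x"
  obtains h where "h differentiable_on sphere 0 1 \<inter> T"
    "h \<in> sphere 0 1 \<inter> T \<rightarrow> sphere 0 1 \<inter> T" "\<And>x. h (- x) = - h x"
    "homotopic_with_canon (\<lambda>z. True) (sphere 0 1 \<inter> T) (sphere 0 1 \<inter> T) F h"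
proof -
  let ?ST = "sphere (0::'a) 1 \<inter> T"
  have "compact ?ST"
    by (simp add: T closed_subspace compact_Int_closed)
  moreover have "- x \<in> ?ST" if "x \<in> ?ST" for x
    using that T by (auto simp: subspace_neg)
  ultimately obtain q where pfq: "polynomial_function q" and qodd: "\<And>x. q (- x) = - q x"
      and qT: "q ` ?ST \<subseteq> T" and q12: "\<And>x. x \<in> ?ST \<Longrightarrow> norm (F x - q x) < 1/2"
    using odd_polynomial_function_approximation [OF _ _ contF T, of "1/2"] Fim Fodd by auto
  have Fn: "norm (F x) = 1" if "x \<in> ?ST" for x
    using Fim that by auto
  have qnz: "q x \<noteq> 0" if "x \<in> ?ST" for x
    using q12 [OF that] Fn [OF that] by auto
  have diffq: "q differentiable_on A" for A
    by (simp add: pfq differentiable_on_polynomial_function)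
  define h where "h \<equiv> \<lambda>x. inverse (norm (q x)) *\<^sub>R q x"
  show thesis
  proof
    show "h differentiable_on ?ST"
      unfolding h_def using qnz
      by (fastforce intro: derivative_intros diffq differentiable_on_compose [OF diffq])
    show "h \<in> ?ST \<rightarrow> ?ST"
      unfolding h_def using qnz qT T by (auto intro: subspace_scale)
    show "h (- x) = - h x" for x
      by (simp add: h_def qodd)
    have "homotopic_with_canon (\<lambda>z. True) ?ST ?ST (\<lambda>x. inverse (norm (F x)) *\<^sub>R F x) h"
      unfolding h_def
    proof (rule homotopic_normalized_by_segments
        [OF T contF differentiable_imp_continuous_on [OF diffq]])
      fix x assume x: "x \<in> ?ST"
      have "0 \<notin> closed_segment (F x) (q x)"
        using q12 [OF x] Fn [OF x] by (auto simp: norm_minus_commute dest: segment_bound)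
      moreover have "closed_segment (F x) (q x) \<subseteq> T"
        using Fim x qT T
        by (metis IntD2 PiE closed_segment_subset image_subset_iff subspace_imp_convex)
      ultimately show "closed_segment (F x) (q x) \<subseteq> T - {0}" by blast
    qed
    then show "homotopic_with_canon (\<lambda>z. True) ?ST ?ST F h"
      by (rule homotopic_with_eq) (auto simp: Fn)
  qed
qed

lemma unit_vector_eq_scaled_projection:
  fixes v d :: "'a::real_inner"
  assumes v: "norm v = 1" and d: "norm d = 1" and eq: "v = (c * (v \<bullet> d)) *\<^sub>R d"
  shows "c = 1 \<and> (v = d \<or> v = - d)"
proof -
  have "v \<bullet> d = c * (v \<bullet> d)"
    using arg_cong [OF eq, of "\<lambda>y. y \<bullet> d"] d by (simp add: norm_eq_1)
  moreover have "v \<bullet> d \<noteq> 0"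
  proof
    assume "v \<bullet> d = 0"
    then have "v = 0"
      using eq by simp
    then show False
      using v by simp
  qed
  ultimately have c: "c = 1"
    by simp
  then have "\<bar>v \<bullet> d\<bar> = 1"
    using arg_cong [OF eq, of norm] v d by simp
  then show ?thesis
    using eq c by (auto simp: abs_if split: if_splits)
qed

lemma homotopic_odd_sphere_map_orthogonal_if_missed:
  fixes h :: "'a::euclidean_space \<Rightarrow> 'a"
  assumes T: "subspace T" and e: "norm e = 1"
    and conth: "continuous_on (sphere 0 1 \<inter> T) h"
    and him: "h \<in> sphere 0 1 \<inter> T \<rightarrow> sphere 0 1 \<inter> T"
    and hodd: "\<And>x. x \<in> sphere 0 1 \<inter> T \<Longrightarrow> h (- x) = - h x"
    and d: "d \<in> sphere 0 1 \<inter> T"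
    and avoid: "\<And>x. x \<in> sphere 0 1 \<inter> T \<Longrightarrow> x \<bullet> e = 0 \<Longrightarrow> h x \<noteq> d"
  obtains G where "continuous_on (sphere 0 1 \<inter> T) G"
    "G \<in> sphere 0 1 \<inter> T \<rightarrow> sphere 0 1 \<inter> T"
    "\<And>x. x \<in> sphere 0 1 \<inter> T \<Longrightarrow> G (- x) = - G x"
    "homotopic_with_canon (\<lambda>z. True) (sphere 0 1 \<inter> T) (sphere 0 1 \<inter> T) h G"
    "\<And>x. x \<in> sphere 0 1 \<inter> T \<Longrightarrow> x \<bullet> e = 0 \<Longrightarrow> G x \<bullet> d = 0"
proof -
  let ?ST = "sphere (0::'a) 1 \<inter> T"
  have hn: "norm (h x) = 1" and hT: "h x \<in> T" if "x \<in> ?ST" for x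
    using him that by auto
  have xe: "0 \<le> 1 - (x \<bullet> e)\<^sup>2" if "x \<in> ?ST" for x
    using Cauchy_Schwarz_ineq2 [of x e] that e by (simp add: abs_square_le_1)
  \<comment> \<open>Removing a fraction c of the d-component of h x can reach 0 only for c = 1 and
      h x = d or -d; c = 1 happens only on the equator, where h avoids both d and -d.\<close>
  have nz: "h x - (c * (h x \<bullet> d)) *\<^sub>R d \<noteq> 0"
    if x: "x \<in> ?ST" and c: "c = 1 \<Longrightarrow> x \<bullet> e = 0" for x c
  proof
    assume "h x - (c * (h x \<bullet> d)) *\<^sub>R d = 0"
    then have "c = 1" and "h x = d \<or> h (- x) = d"
      using unit_vector_eq_scaled_projection [of "h x" d c] hn [OF x] d hodd [OF x] by auto
    moreover have "- x \<in> ?ST" "(- x) \<bullet> e = 0"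
      using x c [OF \<open>c = 1\<close>] T by (auto simp: subspace_neg)
    ultimately show False
      using avoid x c by blast
  qed
  define G' where "G' \<equiv> \<lambda>x. h x - ((1 - (x \<bullet> e)\<^sup>2) * (h x \<bullet> d)) *\<^sub>R d"
  have contG': "continuous_on ?ST G'"
    unfolding G'_def by (intro continuous_intros conth)
  have G'T: "G' x \<in> T" if "x \<in> ?ST" for x
    unfolding G'_def using hT [OF that] d T by (auto intro!: subspace_diff subspace_scale)
  have G'nz: "G' x \<noteq> 0" if "x \<in> ?ST" for x
    unfolding G'_def by (rule nz [OF that]) simp
  define G where "G \<equiv> \<lambda>x. inverse (norm (G' x)) *\<^sub>R G' x"
  show thesis
  proof
    show "continuous_on ?ST G"
      unfolding G_def using G'nz by (intro continuous_intros contG') auto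
    show "G \<in> ?ST \<rightarrow> ?ST"
      unfolding G_def using G'nz G'T T by (auto intro: subspace_scale)
    show "G (- x) = - G x" if "x \<in> ?ST" for x
    proof -
      have "G' (- x) = - G' x"
        by (simp add: G'_def hodd [OF that])
      then show ?thesis
        by (simp add: G_def)
    qed
    have "homotopic_with_canon (\<lambda>z. True) ?ST ?ST (\<lambda>x. inverse (norm (h x)) *\<^sub>R h x) G"
      unfolding G_def
    proof (rule homotopic_normalized_by_segments [OF T conth contG'])
      fix x assume x: "x \<in> ?ST"
      show "closed_segment (h x) (G' x) \<subseteq> T - {0}"
      proof
        fix z assume "z \<in> closed_segment (h x) (G' x)"
        then obtain u where u: "0 \<le> u" "u \<le> 1" and "z = (1 - u) *\<^sub>R h x + u *\<^sub>R G' x"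
          by (auto simp: closed_segment_def)
        then have z: "z = h x - ((u * (1 - (x \<bullet> e)\<^sup>2)) * (h x \<bullet> d)) *\<^sub>R d"
          by (simp add: G'_def algebra_simps)
        have "u * (1 - (x \<bullet> e)\<^sup>2) \<le> 1 - (x \<bullet> e)\<^sup>2"
          using u xe [OF x] by (simp add: mult_left_le_one_le)
        then have "z \<noteq> 0"
          unfolding z by (intro nz [OF x]) simp
        moreover have "z \<in> T"
          unfolding z using hT [OF x] d T by (auto intro!: subspace_diff subspace_scale)
        ultimately show "z \<in> T - {0}" by blast
      qed
    qed
    then show "homotopic_with_canon (\<lambda>z. True) ?ST ?ST h G"
      by (rule homotopic_with_eq) (auto simp: hn)
    show "G x \<bullet> d = 0" if "x \<in> ?ST" "x \<bullet> e = 0" for x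
      using that d by (simp add: G_def G'_def inner_diff_left dot_square_norm)
  qed
qed

lemma homotopic_odd_sphere_map_orthogonal_on_equator:
  fixes F :: "'a::euclidean_space \<Rightarrow> 'a"
  assumes T: "subspace T" and e: "e \<in> T" "norm e = 1"
    and contF: "continuous_on (sphere 0 1 \<inter> T) F"
    and Fim: "F \<in> sphere 0 1 \<inter> T \<rightarrow> sphere 0 1 \<inter> T"
    and Fodd: "\<And>x. x \<in> sphere 0 1 \<inter> T \<Longrightarrow> F (- x) = - F x"
  obtains G d where "continuous_on (sphere 0 1 \<inter> T) G"
    "G \<in> sphere 0 1 \<inter> T \<rightarrow> sphere 0 1 \<inter> T"
    "\<And>x. x \<in> sphere 0 1 \<inter> T \<Longrightarrow> G (- x) = - G x"
    "homotopic_with_canon (\<lambda>z. True) (sphere 0 1 \<inter> T) (sphere 0 1 \<inter> T) F G"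
    "d \<in> sphere 0 1 \<inter> T" "\<And>x. x \<in> sphere 0 1 \<inter> T \<Longrightarrow> x \<bullet> e = 0 \<Longrightarrow> G x \<bullet> d = 0"
proof -
  obtain h where diffh: "h differentiable_on sphere 0 1 \<inter> T"
    and him: "h \<in> sphere 0 1 \<inter> T \<rightarrow> sphere 0 1 \<inter> T" and hodd: "\<And>x. h (- x) = - h x"
    and homFh: "homotopic_with_canon (\<lambda>z. True) (sphere 0 1 \<inter> T) (sphere 0 1 \<inter> T) F h"
    using homotopic_odd_differentiable_sphere_map [OF T contF Fim Fodd] by blast
  define S where "S = T \<inter> {x. x \<bullet> e = 0}"
  have S: "subspace S"
    unfolding S_def by (intro subspace_inter T subspace_hyperplane2)
  have "e \<notin> S"
    using e by (auto simp: S_def)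
  moreover have "S \<subseteq> T"
    by (simp add: S_def)
  ultimately have "S \<subset> T"
    using e(1) by blast
  then have "span S \<subset> span T"
    using S T by (metis span_eq_iff)
  then have "dim S < dim T"
    by (rule dim_psubset)
  moreover have "h differentiable_on sphere 0 1 \<inter> S"
    by (rule differentiable_on_subset [OF diffh]) (auto simp: S_def)
  \<comment> \<open>By Sard's lemma, a differentiable image of a lower-dimensional sphere misses a point.\<close>
  ultimately have "h ` (sphere 0 1 \<inter> S) \<noteq> sphere 0 1 \<inter> T"
    using spheremap_lemma1 [OF S T] by (auto simp: S_def)
  moreover have "h ` (sphere 0 1 \<inter> S) \<subseteq> sphere 0 1 \<inter> T"
    using him by (auto simp: S_def)
  ultimately obtain d where d: "d \<in> sphere 0 1 \<inter> T" "d \<notin> h ` (sphere 0 1 \<inter> S)"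
    by blast
  have avoid: "h x \<noteq> d" if "x \<in> sphere 0 1 \<inter> T" "x \<bullet> e = 0" for x
    using d(2) that by (auto simp: S_def)
  obtain G where "continuous_on (sphere 0 1 \<inter> T) G" "G \<in> sphere 0 1 \<inter> T \<rightarrow> sphere 0 1 \<inter> T"
    "\<And>x. x \<in> sphere 0 1 \<inter> T \<Longrightarrow> G (- x) = - G x"
    and homhG: "homotopic_with_canon (\<lambda>z. True) (sphere 0 1 \<inter> T) (sphere 0 1 \<inter> T) h G"
    and "\<And>x. x \<in> sphere 0 1 \<inter> T \<Longrightarrow> x \<bullet> e = 0 \<Longrightarrow> G x \<bullet> d = 0"
    using homotopic_odd_sphere_map_orthogonal_if_missed
      [OF T e(2) differentiable_imp_continuous_on [OF diffh] him hodd d(1) avoid] by blast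
  then show thesis
    using that homotopic_with_trans [OF homFh homhG] d(1) by blast
qed

definition reflect_along :: "'a::real_inner \<Rightarrow> 'a \<Rightarrow> 'a" where
  "reflect_along u x = x - (2 * (x \<bullet> u) / (u \<bullet> u)) *\<^sub>R u"

lemma linear_reflect_along: "linear (reflect_along u)"
  by (simp add: reflect_along_def linear_iff inner_add_left algebra_simps add_divide_distrib)

lemma reflect_along_uminus [simp]: "reflect_along u (- x) = - reflect_along u x"
  by (rule linear_neg [OF linear_reflect_along])

lemma inner_reflect_along_self: "reflect_along u x \<bullet> u = - (x \<bullet> u)"
  by (cases "u = 0") (simp_all add: reflect_along_def inner_diff_left)

lemma reflect_along_reflect_along [simp]: "reflect_along u (reflect_along u x) = x"
proof -
  have "reflect_along u (reflect_along u x) = reflect_along u x + (2 * (x \<bullet> u) / (u \<bullet> u)) *\<^sub>R u"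
    by (simp add: reflect_along_def [of u "reflect_along u x"] inner_reflect_along_self)
  then show ?thesis
    by (simp add: reflect_along_def)
qed

lemma norm_reflect_along [simp]: "norm (reflect_along u x) = norm x"
proof (cases "u = 0")
  case False
  then have "reflect_along u x \<bullet> reflect_along u x = x \<bullet> x"
    by (simp add: reflect_along_def inner_diff_left inner_diff_right inner_commute [of u x]
        field_simps power2_eq_square)
  then show ?thesis
    by (simp add: norm_eq_sqrt_inner)
qed (simp add: reflect_along_def)

lemma reflect_along_in_subspace:
  "subspace T \<Longrightarrow> u \<in> T \<Longrightarrow> x \<in> T \<Longrightarrow> reflect_along u x \<in> T"
  unfolding reflect_along_def by (intro subspace_diff subspace_scale)

lemma continuous_on_reflect_along: "continuous_on A (reflect_along (u::'a::euclidean_space))"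
  by (metis linear_continuous_on linear_conv_bounded_linear linear_reflect_along)

text \<open>For unit vectors d and e, reflect_along (d - e) exchanges d and e.\<close>
lemma inner_reflect_along_diff_eq_0:
  assumes "norm d = 1" "norm e = 1" "x \<bullet> d = 0"
  shows "reflect_along (d - e) x \<bullet> e = 0"
proof (cases "d = e")
  case False
  define u where "u = d - e"
  have "d \<bullet> d = 1" "e \<bullet> e = 1"
    using assms by (simp_all add: dot_square_norm)
  then have uu: "u \<bullet> u = 2 - 2 * (d \<bullet> e)" and ue: "u \<bullet> e = d \<bullet> e - 1"
    by (simp_all add: u_def inner_diff_left inner_diff_right inner_commute)
  have "u \<bullet> u \<noteq> 0"
    using False by (simp add: u_def)
  then have "reflect_along u x \<bullet> e = x \<bullet> e + x \<bullet> u"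
    unfolding reflect_along_def inner_diff_left inner_scaleR_left ue uu
    by (simp add: field_simps)
  also have "\<dots> = 0"
    using assms by (simp add: u_def inner_diff_right)
  finally show ?thesis
    by (simp add: u_def)
qed (use assms in \<open>simp add: reflect_along_def\<close>)

lemma reflect_along_in_sphere:
  assumes "subspace T" "u \<in> T"
  shows "reflect_along u \<in> sphere 0 1 \<inter> T \<rightarrow> sphere 0 1 \<inter> T"
  using reflect_along_in_subspace [OF assms] by auto

lemma homotopic_odd_sphere_map_reflection_preserving_equator:
  fixes F :: "'a::euclidean_space \<Rightarrow> 'a"
  assumes T: "subspace T" and e: "e \<in> T" "norm e = 1"
    and contF: "continuous_on (sphere 0 1 \<inter> T) F"
    and Fim: "F \<in> sphere 0 1 \<inter> T \<rightarrow> sphere 0 1 \<inter> T"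
    and Fodd: "\<And>x. x \<in> sphere 0 1 \<inter> T \<Longrightarrow> F (- x) = - F x"
  obtains G R where "continuous_on (sphere 0 1 \<inter> T) G"
    "G \<in> sphere 0 1 \<inter> T \<rightarrow> sphere 0 1 \<inter> T"
    "\<And>x. x \<in> sphere 0 1 \<inter> T \<Longrightarrow> G (- x) = - G x"
    "homotopic_with_canon (\<lambda>z. True) (sphere 0 1 \<inter> T) (sphere 0 1 \<inter> T) F G"
    "continuous_on (sphere 0 1 \<inter> T) R" "R \<in> sphere 0 1 \<inter> T \<rightarrow> sphere 0 1 \<inter> T"
    "\<And>x. R (- x) = - R x" "\<And>x. R (R x) = x"
    "\<And>x. x \<in> sphere 0 1 \<inter> T \<Longrightarrow> x \<bullet> e = 0 \<Longrightarrow> R (G x) \<bullet> e = 0"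
proof -
  obtain G d where G: "continuous_on (sphere 0 1 \<inter> T) G"
    "G \<in> sphere 0 1 \<inter> T \<rightarrow> sphere 0 1 \<inter> T"
    "\<And>x. x \<in> sphere 0 1 \<inter> T \<Longrightarrow> G (- x) = - G x"
    "homotopic_with_canon (\<lambda>z. True) (sphere 0 1 \<inter> T) (sphere 0 1 \<inter> T) F G"
    and d: "d \<in> sphere 0 1 \<inter> T" and Gd: "\<And>x. x \<in> sphere 0 1 \<inter> T \<Longrightarrow> x \<bullet> e = 0 \<Longrightarrow> G x \<bullet> d = 0"
    using homotopic_odd_sphere_map_orthogonal_on_equator [OF T e contF Fim Fodd] by blast
  show thesis
  proof (rule that [OF G, of "reflect_along (d - e)"])
    show "reflect_along (d - e) \<in> sphere 0 1 \<inter> T \<rightarrow> sphere 0 1 \<inter> T"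
      using d e by (intro reflect_along_in_sphere T subspace_diff) auto
    show "reflect_along (d - e) (G x) \<bullet> e = 0" if "x \<in> sphere 0 1 \<inter> T" "x \<bullet> e = 0" for x
      using d e Gd [OF that] by (intro inner_reflect_along_diff_eq_0) auto
  qed (simp_all add: continuous_on_reflect_along)
qed

section \<open>Orthonormal frames and the standard spheres\<close>

lemma topspace_nsphere: "topspace (nsphere n) = {x. (\<Sum>i\<le>n. (x i)\<^sup>2) = 1 \<and> (\<forall>i>n. x i = 0)}"
  by (simp add: nsphere)

lemma nsphere_eq_top_of_set: "nsphere n = top_of_set (topspace (nsphere n))"
  by (simp add: nsphere euclidean_product_topology)

lemma continuous_map_nsphere_iff:
  "continuous_map (nsphere m) (nsphere n) f \<longleftrightarrow>
     continuous_on (topspace (nsphere m)) f \<and> f \<in> topspace (nsphere m) \<rightarrow> topspace (nsphere n)"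
  by (metis continuous_map_subtopology_eu nsphere_eq_top_of_set)

lemma topspace_nsphere_mono:
  assumes "m \<le> n"
  shows "topspace (nsphere m) \<subseteq> topspace (nsphere n)"
proof
  fix x assume x: "x \<in> topspace (nsphere m)"
  have "(\<Sum>i\<le>n. (x i)\<^sup>2) = (\<Sum>i\<le>m. (x i)\<^sup>2)"
    using assms x by (intro sum.mono_neutral_right) (auto simp: topspace_nsphere)
  then show "x \<in> topspace (nsphere n)"
    using assms x by (auto simp: topspace_nsphere)
qed

definition orthonormal_upto :: "(nat \<Rightarrow> 'a::real_inner) \<Rightarrow> nat \<Rightarrow> bool" where
  "orthonormal_upto b m \<longleftrightarrow> (\<forall>i\<le>m. \<forall>j\<le>m. b i \<bullet> b j = (if i = j then 1 else 0))"

definition frame_vec :: "(nat \<Rightarrow> 'a::real_vector) \<Rightarrow> nat \<Rightarrow> (nat \<Rightarrow> real) \<Rightarrow> 'a" where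
  "frame_vec b m x = (\<Sum>i\<le>m. x i *\<^sub>R b i)"

definition frame_coords :: "(nat \<Rightarrow> 'a::real_inner) \<Rightarrow> nat \<Rightarrow> 'a \<Rightarrow> nat \<Rightarrow> real" where
  "frame_coords b m y = (\<lambda>i. if i \<le> m then y \<bullet> b i else 0)"

lemma orthonormal_upto_mono: "orthonormal_upto b n \<Longrightarrow> m \<le> n \<Longrightarrow> orthonormal_upto b m"
  by (simp add: orthonormal_upto_def)

lemma norm_orthonormal_upto: "orthonormal_upto b m \<Longrightarrow> i \<le> m \<Longrightarrow> norm (b i) = 1"
  by (simp add: orthonormal_upto_def norm_eq_sqrt_inner)

lemma inner_frame_vec:
  assumes "orthonormal_upto b m" "j \<le> m"
  shows "frame_vec b m x \<bullet> b j = x j"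
proof -
  have "frame_vec b m x \<bullet> b j = (\<Sum>i\<le>m. if i = j then x i else 0)"
    using assms unfolding frame_vec_def inner_sum_left
    by (intro sum.cong) (auto simp: orthonormal_upto_def)
  also have "\<dots> = x j"
    using assms by simp
  finally show ?thesis .
qed

lemma frame_vec_in_span: "frame_vec b m x \<in> span (b ` {..m})"
  unfolding frame_vec_def by (intro span_sum span_scale span_base) auto

lemma frame_vec_frame_coords:
  assumes "orthonormal_upto b m" "y \<in> span (b ` {..m})"
  shows "frame_vec b m (frame_coords b m y) = y"
  using assms(2)
proof (induction rule: span_induct_alt)
  case (step c x y)
  then obtain j where j: "j \<le> m" "x = b j"
    by auto
  have "frame_vec b m (frame_coords b m x) = (\<Sum>i\<le>m. (if i = j then 1 else 0) *\<^sub>R b i)"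
    unfolding frame_vec_def frame_coords_def using assms(1) j
    by (intro sum.cong) (auto simp: orthonormal_upto_def inner_commute)
  also have "\<dots> = x"
    using j by (simp add: if_distrib [where f = "\<lambda>c. c *\<^sub>R _"] cong: if_cong)
  finally have "frame_vec b m (frame_coords b m x) = x" .
  moreover have "frame_vec b m (frame_coords b m (c *\<^sub>R x + y)) =
      c *\<^sub>R frame_vec b m (frame_coords b m x) + frame_vec b m (frame_coords b m y)"
    by (simp add: frame_vec_def frame_coords_def inner_add_left scaleR_add_left sum.distrib
        scaleR_sum_right)
  ultimately show ?case
    using step.IH by simp
qed (simp add: frame_vec_def frame_coords_def)

lemma frame_coords_frame_vec:
  assumes "orthonormal_upto b m" "\<And>i. i > m \<Longrightarrow> x i = 0"
  shows "frame_coords b m (frame_vec b m x) = x"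
  using inner_frame_vec [OF assms(1)] assms(2) by (auto simp: frame_coords_def not_le)

lemma norm_frame_vec:
  assumes "orthonormal_upto b m"
  shows "(norm (frame_vec b m x))\<^sup>2 = (\<Sum>i\<le>m. (x i)\<^sup>2)"
proof -
  have "(norm (frame_vec b m x))\<^sup>2 = frame_vec b m x \<bullet> (\<Sum>i\<le>m. x i *\<^sub>R b i)"
    by (simp add: power2_norm_eq_inner frame_vec_def)
  also have "\<dots> = (\<Sum>i\<le>m. x i * (frame_vec b m x \<bullet> b i))"
    by (simp add: inner_sum_right)
  also have "\<dots> = (\<Sum>i\<le>m. (x i)\<^sup>2)"
    using inner_frame_vec [OF assms] by (simp add: power2_eq_square)
  finally show ?thesis .
qed

lemma frame_vec_in_sphere:
  assumes "orthonormal_upto b m" "x \<in> topspace (nsphere m)"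
  shows "frame_vec b m x \<in> sphere 0 1 \<inter> span (b ` {..m})"
proof -
  have "frame_vec b m x \<bullet> frame_vec b m x = 1"
    using norm_frame_vec [OF assms(1), of x] assms(2)
    by (simp add: topspace_nsphere power2_norm_eq_inner)
  then show ?thesis
    using frame_vec_in_span by (simp add: norm_eq_1)
qed

lemma frame_coords_in_nsphere:
  assumes "orthonormal_upto b m" "y \<in> sphere 0 1 \<inter> span (b ` {..m})"
  shows "frame_coords b m y \<in> topspace (nsphere m)"
proof -
  have "(\<Sum>i\<le>m. (frame_coords b m y i)\<^sup>2) = (norm (frame_vec b m (frame_coords b m y)))\<^sup>2"
    by (simp add: norm_frame_vec [OF assms(1)])
  also have "\<dots> = (norm y)\<^sup>2"
    using frame_vec_frame_coords [OF assms(1)] assms(2) by simp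
  finally have "(\<Sum>i\<le>m. (frame_coords b m y i)\<^sup>2) = 1"
    using assms(2) by simp
  then show ?thesis
    by (simp add: topspace_nsphere frame_coords_def [of b m y])
qed

lemma frame_vec_uminus: "frame_vec b m (- x) = - frame_vec b m x"
  by (simp add: frame_vec_def sum_negf)

lemma frame_coords_uminus: "frame_coords b m (- y) = - frame_coords b m y"
  by (auto simp: frame_coords_def)

lemma continuous_on_frame_vec: "continuous_on A (frame_vec (b :: nat \<Rightarrow> 'a::real_normed_vector) m)"
  unfolding frame_vec_def
  by (intro continuous_intros continuous_on_product_then_coordinatewise continuous_on_id)

lemma continuous_on_frame_coords: "continuous_on A (frame_coords b m)"
  unfolding frame_coords_def
proof (intro continuous_on_coordinatewise_then_product)
  show "continuous_on A (\<lambda>y. if i \<le> m then y \<bullet> b i else 0)" for i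
    by (cases "i \<le> m") (auto intro!: continuous_intros)
qed

lemma continuous_map_frame_vec:
  assumes "orthonormal_upto b m"
  shows "continuous_map (nsphere m) (top_of_set (sphere 0 1 \<inter> span (b ` {..m}))) (frame_vec b m)"
  using frame_vec_in_sphere [OF assms] continuous_on_frame_vec
  by (subst nsphere_eq_top_of_set) (auto simp: continuous_map_subtopology_eu)

lemma continuous_map_frame_coords:
  assumes "orthonormal_upto b m"
  shows "continuous_map (top_of_set (sphere 0 1 \<inter> span (b ` {..m}))) (nsphere m) (frame_coords b m)"
  using frame_coords_in_nsphere [OF assms] continuous_on_frame_coords
  by (subst nsphere_eq_top_of_set) (auto simp: continuous_map_subtopology_eu)

definition frame_conj :: "(nat \<Rightarrow> 'a::real_inner) \<Rightarrow> nat \<Rightarrow> ('a \<Rightarrow> 'a) \<Rightarrow> (nat \<Rightarrow> real) \<Rightarrow> nat \<Rightarrow> real"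
  where "frame_conj b m F = frame_coords b m \<circ> F \<circ> frame_vec b m"

lemma continuous_map_frame_conj:
  assumes "orthonormal_upto b m" "continuous_on (sphere 0 1 \<inter> span (b ` {..m})) F"
    "F \<in> sphere 0 1 \<inter> span (b ` {..m}) \<rightarrow> sphere 0 1 \<inter> span (b ` {..m})"
  shows "continuous_map (nsphere m) (nsphere m) (frame_conj b m F)"
  unfolding frame_conj_def using assms(2,3)
  by (intro continuous_map_compose [OF continuous_map_frame_vec [OF assms(1)]]
      continuous_map_compose [OF _ continuous_map_frame_coords [OF assms(1)]])
     (simp add: continuous_map_subtopology_eu)

lemma homotopic_frame_conj:
  assumes "orthonormal_upto b m"
    "homotopic_with_canon (\<lambda>z. True)
       (sphere 0 1 \<inter> span (b ` {..m})) (sphere 0 1 \<inter> span (b ` {..m})) F G"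
  shows "homotopic_with (\<lambda>z. True) (nsphere m) (nsphere m) (frame_conj b m F) (frame_conj b m G)"
  unfolding frame_conj_def
  by (rule homotopic_with_compose_continuous_map_right
      [OF homotopic_with_compose_continuous_map_left
        [OF assms(2) continuous_map_frame_coords [OF assms(1)]]
        continuous_map_frame_vec [OF assms(1)]]) auto

lemma frame_conj_frame_lift:
  assumes "orthonormal_upto b m" "f \<in> topspace (nsphere m) \<rightarrow> topspace (nsphere m)"
    "x \<in> topspace (nsphere m)"
  shows "frame_conj b m (frame_vec b m \<circ> f \<circ> frame_coords b m) x = f x"
proof -
  have "frame_coords b m (frame_vec b m y) = y" if "y \<in> topspace (nsphere m)" for y
    using that by (intro frame_coords_frame_vec [OF assms(1)]) (auto simp: topspace_nsphere)
  then show ?thesis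
    using assms(2,3) by (auto simp: frame_conj_def)
qed

lemma frame_conj_compose:
  assumes "orthonormal_upto b m" "G \<in> sphere 0 1 \<inter> span (b ` {..m}) \<rightarrow> sphere 0 1 \<inter> span (b ` {..m})"
    "x \<in> topspace (nsphere m)"
  shows "frame_conj b m (R \<circ> G) x = (frame_conj b m R \<circ> frame_conj b m G) x"
proof -
  have "G (frame_vec b m x) \<in> span (b ` {..m})"
    using assms(2) frame_vec_in_sphere [OF assms(1,3)] by auto
  then show ?thesis
    by (simp add: frame_conj_def frame_vec_frame_coords [OF assms(1)])
qed

lemma sphere_map_frame_lift:
  assumes "orthonormal_upto b m" "continuous_map (nsphere m) (nsphere m) f"
  shows "continuous_on (sphere 0 1 \<inter> span (b ` {..m})) (frame_vec b m \<circ> f \<circ> frame_coords b m)"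
    and "frame_vec b m \<circ> f \<circ> frame_coords b m
           \<in> sphere 0 1 \<inter> span (b ` {..m}) \<rightarrow> sphere 0 1 \<inter> span (b ` {..m})"
proof -
  have "continuous_map (top_of_set (sphere 0 1 \<inter> span (b ` {..m})))
      (top_of_set (sphere 0 1 \<inter> span (b ` {..m})))
      (frame_vec b m \<circ> f \<circ> frame_coords b m)"
    by (rule continuous_map_compose [OF continuous_map_frame_coords [OF assms(1)]
          continuous_map_compose [OF assms(2) continuous_map_frame_vec [OF assms(1)]]])
  then show "continuous_on (sphere 0 1 \<inter> span (b ` {..m})) (frame_vec b m \<circ> f \<circ> frame_coords b m)"
    and "frame_vec b m \<circ> f \<circ> frame_coords b m
           \<in> sphere 0 1 \<inter> span (b ` {..m}) \<rightarrow> sphere 0 1 \<inter> span (b ` {..m})"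
    by (simp_all add: continuous_map_subtopology_eu)
qed

lemma Brouwer_degree2_frame_conj_lift:
  assumes "orthonormal_upto b m" "continuous_map (nsphere m) (nsphere m) f"
  shows "Brouwer_degree2 m (frame_conj b m (frame_vec b m \<circ> f \<circ> frame_coords b m)) =
    Brouwer_degree2 m f"
  using frame_conj_frame_lift [OF assms(1)] assms(2)
  by (intro Brouwer_degree2_eq) (auto simp: continuous_map_nsphere_iff)

lemma frame_conj_uminus:
  assumes "orthonormal_upto b m" "x \<in> topspace (nsphere m)"
    "\<And>y. y \<in> sphere 0 1 \<inter> span (b ` {..m}) \<Longrightarrow> H (- y) = - H y"
  shows "frame_conj b m H (- x) = - frame_conj b m H x"
  using assms(3) [OF frame_vec_in_sphere [OF assms(1,2)]]
  by (simp add: frame_conj_def frame_vec_uminus frame_coords_uminus)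

lemma frame_conj_involution:
  assumes "orthonormal_upto b m" "x \<in> topspace (nsphere m)"
    "R \<in> sphere 0 1 \<inter> span (b ` {..m}) \<rightarrow> sphere 0 1 \<inter> span (b ` {..m})" "\<And>y. R (R y) = y"
  shows "frame_conj b m R (frame_conj b m R x) = x"
  using frame_conj_compose [OF assms(1,3,2), of R] assms(2,4) frame_coords_frame_vec [OF assms(1)]
  by (auto simp: frame_conj_def topspace_nsphere)

lemma frame_conj_equator:
  assumes b: "orthonormal_upto b (Suc m)"
    and H: "H \<in> sphere 0 1 \<inter> span (b ` {..Suc m}) \<rightarrow> sphere 0 1 \<inter> span (b ` {..Suc m})"
    and equator: "\<And>y. y \<in> sphere 0 1 \<inter> span (b ` {..Suc m}) \<Longrightarrow> y \<bullet> b (Suc m) = 0 \<Longrightarrow>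
      H y \<bullet> b (Suc m) = 0"
    and x: "x \<in> topspace (nsphere m)"
  shows "frame_conj b (Suc m) H x \<in> topspace (nsphere m)"
proof -
  have x': "x \<in> topspace (nsphere (Suc m))"
    using x topspace_nsphere_mono [of m "Suc m"] by auto
  have "frame_vec b (Suc m) x \<bullet> b (Suc m) = 0"
    using x by (simp add: inner_frame_vec [OF b] topspace_nsphere)
  then have "frame_conj b (Suc m) H x (Suc m) = 0"
    using equator [OF frame_vec_in_sphere [OF b x']] by (simp add: frame_conj_def frame_coords_def)
  moreover have "frame_conj b (Suc m) H x \<in> topspace (nsphere (Suc m))"
    unfolding frame_conj_def o_def using frame_vec_in_sphere [OF b x'] H
    by (intro frame_coords_in_nsphere [OF b]) auto
  ultimately show ?thesis
    using topspace_nsphere_minus1 by fastforce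
qed

section \<open>Borsuk's theorem on odd maps\<close>

lemma odd_Brouwer_degree2_compose_involution:
  assumes \<rho>: "continuous_map (nsphere n) (nsphere n) \<rho>"
    and inv: "\<And>x. x \<in> topspace (nsphere n) \<Longrightarrow> \<rho> (\<rho> x) = x"
    and g: "continuous_map (nsphere n) (nsphere n) g"
  shows "odd (Brouwer_degree2 n (\<rho> \<circ> g)) \<longleftrightarrow> odd (Brouwer_degree2 n g)"
proof -
  have "Brouwer_degree2 n \<rho> * Brouwer_degree2 n \<rho> = Brouwer_degree2 n id"
    using inv by (metis Brouwer_degree2_compose Brouwer_degree2_eq \<rho> comp_apply id_apply)
  then have "odd (Brouwer_degree2 n \<rho>)"
    by (metis Brouwer_degree2_id even_mult_iff odd_one)
  then show ?thesis
    by (simp add: Brouwer_degree2_compose [OF g \<rho>])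
qed

lemma topspace_nsphere_0:
  "topspace (nsphere 0) = {\<lambda>i. if i = 0 then 1 else 0, \<lambda>i. if i = 0 then -1 else 0}"
  by (auto simp: topspace_nsphere power2_eq_1_iff fun_eq_iff)

lemma odd_Brouwer_degree2_odd_map_0:
  assumes "continuous_map (nsphere 0) (nsphere 0) f"
    and odd: "\<And>x. x \<in> topspace (nsphere 0) \<Longrightarrow> f (- x) = - f x"
  shows "odd (Brouwer_degree2 0 f)"
proof -
  define e where "e = (\<lambda>i::nat. if i = 0 then 1 else (0::real))"
  have sphere0: "topspace (nsphere 0) = {e, - e}"
    by (auto simp: topspace_nsphere_0 e_def fun_eq_iff)
  then have "f e = e \<or> f e = - e"
    using assms(1) by (auto simp: continuous_map_nsphere_iff)
  then show ?thesis
  proof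
    assume "f e = e"
    then have "Brouwer_degree2 0 f = Brouwer_degree2 0 id"
      using odd sphere0 by (intro Brouwer_degree2_eq) auto
    then show ?thesis
      by simp
  next
    assume fe: "f e = - e"
    have "f e = (\<lambda>i. if i = 0 then - e i else e i)"
      using fe by (simp add: e_def fun_eq_iff)
    moreover have "f (- e) = (\<lambda>i. if i = 0 then - (- e) i else (- e) i)"
      using fe odd [of e] sphere0 by (simp add: e_def fun_eq_iff)
    ultimately have "f x = (\<lambda>i. if i = 0 then - x i else x i)" if "x = e \<or> x = - e" for x
      using that by auto
    then have "Brouwer_degree2 0 f = Brouwer_degree2 0 (\<lambda>x i. if i = 0 then - x i else x i)"
      using sphere0 by (intro Brouwer_degree2_eq) auto
    then show ?thesis
      by (simp add: Brouwer_degree2_reflection)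
  qed
qed

lemma odd_map_nsphere_Suc_reduction:
  fixes b :: "nat \<Rightarrow> 'a::euclidean_space"
  assumes b: "orthonormal_upto b (Suc m)"
    and f: "continuous_map (nsphere (Suc m)) (nsphere (Suc m)) f"
    and fodd: "\<And>x. x \<in> topspace (nsphere (Suc m)) \<Longrightarrow> f (- x) = - f x"
  obtains k where "continuous_map (nsphere (Suc m)) (nsphere (Suc m)) k"
    "\<And>x. x \<in> topspace (nsphere (Suc m)) \<Longrightarrow> k (- x) = - k x"
    "k \<in> topspace (nsphere m) \<rightarrow> topspace (nsphere m)"
    "odd (Brouwer_degree2 (Suc m) k) \<Longrightarrow> odd (Brouwer_degree2 (Suc m) f)"
proof -
  let ?n = "Suc m"
  let ?ST = "sphere (0::'a) 1 \<inter> span (b ` {..?n})"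
  define F where "F = frame_vec b ?n \<circ> f \<circ> frame_coords b ?n"
  have Fodd: "F (- y) = - F y" if "y \<in> ?ST" for y
    using fodd frame_coords_in_nsphere [OF b that]
    by (simp add: F_def frame_coords_uminus frame_vec_uminus)
  have e: "b ?n \<in> span (b ` {..?n})" "norm (b ?n) = 1"
    using norm_orthonormal_upto [OF b] by (auto intro: span_base)
  obtain G R where contG: "continuous_on ?ST G" and Gim: "G \<in> ?ST \<rightarrow> ?ST"
    and Godd: "\<And>y. y \<in> ?ST \<Longrightarrow> G (- y) = - G y"
    and FG: "homotopic_with_canon (\<lambda>z. True) ?ST ?ST F G"
    and contR: "continuous_on ?ST R" and Rim: "R \<in> ?ST \<rightarrow> ?ST"
    and Rodd: "\<And>y. R (- y) = - R y" and RR: "\<And>y. R (R y) = y"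
    and equator: "\<And>y. y \<in> ?ST \<Longrightarrow> y \<bullet> b ?n = 0 \<Longrightarrow> R (G y) \<bullet> b ?n = 0"
    using homotopic_odd_sphere_map_reflection_preserving_equator [OF subspace_span e
        sphere_map_frame_lift [OF b f, folded F_def] Fodd] by blast
  let ?g = "frame_conj b ?n G" and ?\<rho> = "frame_conj b ?n R"
  have cG: "continuous_map (nsphere ?n) (nsphere ?n) ?g"
    by (rule continuous_map_frame_conj [OF b contG Gim])
  have cR: "continuous_map (nsphere ?n) (nsphere ?n) ?\<rho>"
    by (rule continuous_map_frame_conj [OF b contR Rim])
  show thesis
  proof (rule that [of "?\<rho> \<circ> ?g"])
    show "continuous_map (nsphere ?n) (nsphere ?n) (?\<rho> \<circ> ?g)"
      by (rule continuous_map_compose [OF cG cR])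
    show "(?\<rho> \<circ> ?g) (- x) = - (?\<rho> \<circ> ?g) x" if x: "x \<in> topspace (nsphere ?n)" for x
    proof -
      have "?g x \<in> topspace (nsphere ?n)"
        using cG x by (auto simp: continuous_map_nsphere_iff)
      then show ?thesis
        using frame_conj_uminus [where H = G, OF b x Godd]
          frame_conj_uminus [where H = R, OF b _ Rodd] by simp
    qed
    show "?\<rho> \<circ> ?g \<in> topspace (nsphere m) \<rightarrow> topspace (nsphere m)"
    proof
      fix x assume x: "x \<in> topspace (nsphere m)"
      have "R \<circ> G \<in> ?ST \<rightarrow> ?ST"
        using Gim Rim by auto
      then have "frame_conj b ?n (R \<circ> G) x \<in> topspace (nsphere m)"
        by (rule frame_conj_equator [OF b _ _ x]) (simp add: equator)
      moreover have "frame_conj b ?n (R \<circ> G) x = (?\<rho> \<circ> ?g) x"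
        using frame_conj_compose [OF b Gim] x topspace_nsphere_mono [of m ?n] by auto
      ultimately show "(?\<rho> \<circ> ?g) x \<in> topspace (nsphere m)"
        by simp
    qed
    assume "odd (Brouwer_degree2 ?n (?\<rho> \<circ> ?g))"
    then have "odd (Brouwer_degree2 ?n ?g)"
      using odd_Brouwer_degree2_compose_involution [OF cR _ cG]
        frame_conj_involution [OF b _ Rim RR] by simp
    moreover have "Brouwer_degree2 ?n (frame_conj b ?n F) = Brouwer_degree2 ?n ?g"
      by (rule Brouwer_degree2_homotopic [OF homotopic_frame_conj [OF b FG]])
    ultimately show "odd (Brouwer_degree2 ?n f)"
      using Brouwer_degree2_frame_conj_lift [OF b f] by (simp add: F_def)
  qed
qed

theorem odd_Brouwer_degree2_odd_map:
  fixes b :: "nat \<Rightarrow> 'a::euclidean_space"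
  assumes "orthonormal_upto b n" "continuous_map (nsphere n) (nsphere n) f"
    "\<And>x. x \<in> topspace (nsphere n) \<Longrightarrow> f (- x) = - f x"
  shows "odd (Brouwer_degree2 n f)"
  using assms
proof (induction n arbitrary: f)
  case 0
  then show ?case
    using odd_Brouwer_degree2_odd_map_0 by blast
next
  case (Suc m)
  obtain k where k: "continuous_map (nsphere (Suc m)) (nsphere (Suc m)) k"
    and kodd: "\<And>x. x \<in> topspace (nsphere (Suc m)) \<Longrightarrow> k (- x) = - k x"
    and kequator: "k \<in> topspace (nsphere m) \<rightarrow> topspace (nsphere m)"
    and deg: "odd (Brouwer_degree2 (Suc m) k) \<Longrightarrow> odd (Brouwer_degree2 (Suc m) f)"
    using odd_map_nsphere_Suc_reduction [OF Suc.prems] by blast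
  have sub: "topspace (nsphere m) \<subseteq> topspace (nsphere (Suc m))"
    by (simp add: topspace_nsphere_mono)
  have "continuous_map (nsphere m) (nsphere m) k"
    using k kequator sub by (auto simp: continuous_map_nsphere_iff intro: continuous_on_subset)
  then have "odd (Brouwer_degree2 m k)"
    using kodd sub
    by (intro Suc.IH orthonormal_upto_mono [OF Suc.prems(1)]) (auto simp: fun_Compl_def)
  moreover have "(k \<circ> (\<lambda>x i. - x i)) x = ((\<lambda>x i. - x i) \<circ> k) x"
    if "x \<in> topspace (nsphere (Suc m))" for x
    using kodd [OF that] by (simp add: fun_Compl_def)
  then have "even (Brouwer_degree2 (Suc m) k - Brouwer_degree2 m k)"
    using Borsuk_odd_mapping_degree_step [OF k] kequator by simp
  ultimately show ?case
    using deg by simp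
qed

lemma odd_map_nsphere_surjective:
  fixes b :: "nat \<Rightarrow> 'a::euclidean_space"
  assumes "orthonormal_upto b n" "continuous_map (nsphere n) (nsphere n) f"
    "\<And>x. x \<in> topspace (nsphere n) \<Longrightarrow> f (- x) = - f x"
  shows "f ` topspace (nsphere n) = topspace (nsphere n)"
proof (rule ccontr)
  assume "f ` topspace (nsphere n) \<noteq> topspace (nsphere n)"
  then have "Brouwer_degree2 n f = 0"
    by (rule Brouwer_degree2_nonsurjective [OF assms(2)])
  with odd_Brouwer_degree2_odd_map [OF assms] show False
    by simp
qed

lemma normalized_functions_in_nsphere:
  fixes a :: "nat \<Rightarrow> 'b::topological_space \<Rightarrow> real"
  assumes "m \<le> Suc k" and cont: "\<And>i. i < m \<Longrightarrow> continuous_on X (a i)"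
    and nz: "\<And>x. x \<in> X \<Longrightarrow> \<exists>i<m. a i x \<noteq> 0"
  defines "h \<equiv> \<lambda>x j. if j < m then a j x / sqrt (\<Sum>i<m. (a i x)\<^sup>2) else 0"
  shows "continuous_on X h" and "h \<in> X \<rightarrow> topspace (nsphere k)"
proof -
  define Q where "Q x = (\<Sum>i<m. (a i x)\<^sup>2)" for x
  have Q: "Q x > 0" if x: "x \<in> X" for x
  proof -
    obtain i where "i < m" "a i x \<noteq> 0"
      using nz [OF x] by blast
    then show ?thesis
      unfolding Q_def by (intro sum_pos2 [of _ i]) auto
  qed
  have "continuous_on X (\<lambda>x. h x j)" for j
  proof (cases "j < m")
    case True
    have "continuous_on X Q"
      unfolding Q_def by (intro continuous_on_sum continuous_on_power cont) simp
    then have "continuous_on X (\<lambda>x. a j x / sqrt (Q x))"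
      using Q by (intro continuous_on_divide cont [OF True] continuous_on_real_sqrt) force+
    then show ?thesis
      using True by (simp add: h_def Q_def)
  qed (simp add: h_def)
  then show "continuous_on X h"
    by (rule continuous_on_coordinatewise_then_product)
  show "h \<in> X \<rightarrow> topspace (nsphere k)"
  proof
    fix x assume x: "x \<in> X"
    have "(\<Sum>j\<le>k. (h x j)\<^sup>2) = (\<Sum>j<m. (h x j)\<^sup>2)"
      using \<open>m \<le> Suc k\<close> by (intro sum.mono_neutral_right) (auto simp: h_def)
    also have "\<dots> = (\<Sum>j<m. (a j x)\<^sup>2 / Q x)"
      using Q [OF x] by (intro sum.cong) (auto simp: h_def Q_def power_divide)
    also have "\<dots> = 1"
      using Q [OF x] by (simp add: Q_def flip: sum_divide_distrib)
    finally show "h x \<in> topspace (nsphere k)"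
      using \<open>m \<le> Suc k\<close> by (auto simp: topspace_nsphere h_def)
  qed
qed

theorem Borsuk_Ulam_nsphere:
  fixes b :: "nat \<Rightarrow> 'a::euclidean_space" and a :: "nat \<Rightarrow> (nat \<Rightarrow> real) \<Rightarrow> real"
  assumes b: "orthonormal_upto b n" and "m \<le> n"
    and cont: "\<And>i. i < m \<Longrightarrow> continuous_on (topspace (nsphere n)) (a i)"
    and odd: "\<And>i x. i < m \<Longrightarrow> x \<in> topspace (nsphere n) \<Longrightarrow> a i (- x) = - a i x"
  shows "\<exists>x \<in> topspace (nsphere n). \<forall>i<m. a i x = 0"
proof (rule ccontr)
  assume "\<not> ?thesis"
  then have nz: "\<exists>i<m. a i x \<noteq> 0" if "x \<in> topspace (nsphere n)" for x
    using that by blast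
  obtain n' where n: "n = Suc n'" and "m \<le> Suc n'"
    using nz [OF in_topspace_nsphere] \<open>m \<le> n\<close> by (cases n) auto
  \<comment> \<open>Normalizing (a 0, ..., a (m - 1)) gives an odd map from the n-sphere into its
      equator, contradicting Borsuk's theorem.\<close>
  define h where "h \<equiv> \<lambda>x j. if j < m then a j x / sqrt (\<Sum>i<m. (a i x)\<^sup>2) else 0"
  have h: "continuous_on (topspace (nsphere n)) h"
    "h \<in> topspace (nsphere n) \<rightarrow> topspace (nsphere n')"
    unfolding h_def using normalized_functions_in_nsphere [OF \<open>m \<le> Suc n'\<close> cont nz] by auto
  then have "continuous_map (nsphere n) (nsphere n) h"
    using topspace_nsphere_mono [of n' n] n by (auto simp: continuous_map_nsphere_iff)
  moreover have "h (- x) = - h x" if "x \<in> topspace (nsphere n)" for x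
    using odd that by (simp add: h_def fun_eq_iff)
  ultimately have "h ` topspace (nsphere n) = topspace (nsphere n)"
    by (rule odd_map_nsphere_surjective [OF b])
  moreover have "(\<lambda>i. if i = n then 1 else 0) \<in> topspace (nsphere n)"
    by (auto simp: topspace_nsphere if_distrib [where f = "\<lambda>x. x\<^sup>2"] cong: if_cong)
  ultimately obtain x where x: "x \<in> topspace (nsphere n)" and "h x = (\<lambda>i. if i = n then 1 else 0)"
    by (metis imageE)
  moreover have "(\<lambda>i. if i = n then 1 else 0) \<notin> topspace (nsphere n')"
    by (simp add: topspace_nsphere n)
  ultimately show False
    using funcset_mem [OF h(2) x] by simp
qed

section \<open>The genus of coordinate p-spheres\<close>

definition p_mass :: "('v::finite \<Rightarrow> real) \<Rightarrow> real \<Rightarrow> real^'v \<Rightarrow> real" where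
  "p_mass \<mu> p f = (\<Sum>i\<in>UNIV. \<mu> i * \<bar>f$i\<bar> powr p)"

lemma mem_sphere_p: "f \<in> sphere_p \<mu> p \<longleftrightarrow> p_mass \<mu> p f = 1"
  by (simp add: sphere_p_def p_mass_def)

lemma sphere_p_nonzero: "f \<in> sphere_p \<mu> p \<Longrightarrow> f \<noteq> 0"
  by (auto simp: sphere_p_def)

lemma p_mass_pos:
  assumes "\<forall>i. \<mu> i > 0" "f \<noteq> 0"
  shows "p_mass \<mu> p f > 0"
proof -
  obtain v where "f $ v \<noteq> 0"
    using assms(2) by (auto simp: vec_eq_iff)
  then show ?thesis
    unfolding p_mass_def using assms(1) by (intro sum_pos2 [of UNIV v]) (auto simp: less_imp_le)
qed

lemma p_mass_scaleR: "c \<ge> 0 \<Longrightarrow> p_mass \<mu> p (c *\<^sub>R f) = c powr p * p_mass \<mu> p f"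
  by (simp add: p_mass_def sum_distrib_left abs_mult powr_mult algebra_simps)

lemma p_mass_uminus [simp]: "p_mass \<mu> p (- f) = p_mass \<mu> p f"
  by (simp add: p_mass_def)

lemma continuous_on_p_mass: "p > 0 \<Longrightarrow> continuous_on A (p_mass \<mu> p)"
  unfolding p_mass_def
  by (intro continuous_on_sum continuous_on_mult continuous_on_const continuous_on_powr'
      continuous_on_rabs continuous_on_component continuous_on_id) auto

definition p_normalize :: "('v::finite \<Rightarrow> real) \<Rightarrow> real \<Rightarrow> real^'v \<Rightarrow> real^'v" where
  "p_normalize \<mu> p f = p_mass \<mu> p f powr (-1/p) *\<^sub>R f"

lemma p_normalize_in_sphere_p:
  assumes "\<forall>i. \<mu> i > 0" "p > 0" "f \<noteq> 0"
  shows "p_normalize \<mu> p f \<in> sphere_p \<mu> p"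
proof -
  have pos: "p_mass \<mu> p f > 0"
    by (rule p_mass_pos [OF assms(1,3)])
  have "p_mass \<mu> p (p_normalize \<mu> p f) = p_mass \<mu> p f powr (-1/p * p) * p_mass \<mu> p f"
    by (simp add: p_normalize_def p_mass_scaleR powr_powr)
  also have "\<dots> = 1"
    using pos assms(2) by (simp add: powr_minus field_simps)
  finally show ?thesis
    by (simp add: mem_sphere_p)
qed

lemma p_normalize_uminus: "p_normalize \<mu> p (- f) = - p_normalize \<mu> p f"
  by (simp add: p_normalize_def)

lemma p_normalize_component_eq_0: "f $ i = 0 \<Longrightarrow> p_normalize \<mu> p f $ i = 0"
  by (simp add: p_normalize_def)

lemma continuous_on_p_normalize:
  assumes "\<forall>i. \<mu> i > 0" "p > 0"
  shows "continuous_on (- {0}) (p_normalize \<mu> p)"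
proof -
  have "p_mass \<mu> p f \<noteq> 0" if "f \<in> - {0}" for f
    using p_mass_pos [OF assms(1), where f = f and p = p] that by auto
  then show ?thesis
    unfolding p_normalize_def
    by (intro continuous_on_scaleR continuous_on_powr continuous_on_p_mass [OF assms(2)]
        continuous_on_const continuous_on_id) auto
qed

lemma closed_sphere_p:
  assumes "p > 0"
  shows "closed (sphere_p \<mu> p)"
proof -
  have "closed {f. p_mass \<mu> p f = 1}"
    by (intro closed_Collect_eq continuous_on_p_mass [OF assms] continuous_on_const)
  then show ?thesis
    by (simp add: mem_sphere_p [symmetric])
qed

lemma genus_eqI:
  assumes "genus_le B k" "\<And>m. m < k \<Longrightarrow> \<not> genus_le B m"
  shows "genus B = k"
  unfolding genus_def using assms by (intro Least_equality) (auto simp: not_less [symmetric])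

definition support_sphere :: "('v::finite \<Rightarrow> real) \<Rightarrow> real \<Rightarrow> 'v set \<Rightarrow> (real^'v) set" where
  "support_sphere \<mu> p S = {f \<in> sphere_p \<mu> p. \<forall>i. i \<notin> S \<longrightarrow> f $ i = 0}"

lemma genus_le_support_sphere: "genus_le (support_sphere \<mu> p S) (card S)"
proof -
  obtain s where s: "bij_betw s {0..<card S} S"
    using ex_bij_betw_nat_finite [of S] by auto
  have "\<exists>i<card S. f $ s i \<noteq> 0" if f: "f \<in> support_sphere \<mu> p S" for f
  proof -
    have "f \<noteq> 0"
      using f sphere_p_nonzero by (auto simp: support_sphere_def)
    then obtain v where "f $ v \<noteq> 0"
      by (auto simp: vec_eq_iff)
    moreover from this have "v \<in> s ` {0..<card S}"
      using f s by (auto simp: support_sphere_def bij_betw_def)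
    ultimately show ?thesis
      by auto
  qed
  then show ?thesis
    unfolding genus_le_def by (intro exI [of _ "\<lambda>i f. f $ s i"]) (auto intro: continuous_intros)
qed

lemma orthonormal_upto_axis: "inj_on s {..n} \<Longrightarrow> orthonormal_upto (\<lambda>i. axis (s i) (1::real)) n"
  by (auto simp: orthonormal_upto_def inner_axis_axis inj_on_def)

lemma frame_vec_axis_component_eq_0:
  "v \<notin> s ` {..n} \<Longrightarrow> frame_vec (\<lambda>i. axis (s i) (1::real)) n x $ v = 0"
  by (auto simp: frame_vec_def axis_def intro!: sum.neutral)

lemma not_genus_le_support_sphere:
  fixes \<mu> :: "'v::finite \<Rightarrow> real"
  assumes \<mu>: "\<forall>i. \<mu> i > 0" and p: "p > 0" and m: "m < card S"
  shows "\<not> genus_le (support_sphere \<mu> p S) m"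
proof
  assume "genus_le (support_sphere \<mu> p S) m"
  then obtain g :: "nat \<Rightarrow> real^'v \<Rightarrow> real"
    where gc: "\<And>i. i < m \<Longrightarrow> continuous_on (support_sphere \<mu> p S) (g i)"
    and godd: "\<And>i x. i < m \<Longrightarrow> x \<in> support_sphere \<mu> p S \<Longrightarrow> g i (- x) = - g i x"
    and gnz: "\<And>x. x \<in> support_sphere \<mu> p S \<Longrightarrow> \<exists>i<m. g i x \<noteq> 0"
    unfolding genus_le_def by blast
  obtain n where n: "card S = Suc n"
    using m not0_implies_Suc by force
  obtain s where s: "bij_betw s {..n} S"
    using ex_bij_betw_nat_finite [of S] n by (auto simp: atLeast0LessThan lessThan_Suc_atMost)
  define b where "b = (\<lambda>i. axis (s i) (1::real))"
  have b: "orthonormal_upto b n"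
    unfolding b_def using s by (simp add: orthonormal_upto_axis bij_betw_def)
  define \<Psi> where "\<Psi> = p_normalize \<mu> p \<circ> frame_vec b n"
  have nz: "frame_vec b n x \<noteq> 0" if "x \<in> topspace (nsphere n)" for x
    using frame_vec_in_sphere [OF b that] by auto
  have \<Psi>: "\<Psi> x \<in> support_sphere \<mu> p S" if x: "x \<in> topspace (nsphere n)" for x
    using p_normalize_in_sphere_p [OF \<mu> p nz [OF x]] frame_vec_axis_component_eq_0 [of _ s n x] s
    by (auto simp: support_sphere_def \<Psi>_def b_def bij_betw_def p_normalize_component_eq_0)
  have "continuous_on (topspace (nsphere n)) \<Psi>"
    unfolding \<Psi>_def o_def
    by (rule continuous_on_compose2 [OF continuous_on_p_normalize [OF \<mu> p] continuous_on_frame_vec])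
      (use nz in auto)
  then have cont: "continuous_on (topspace (nsphere n)) (g i \<circ> \<Psi>)" if "i < m" for i
    unfolding o_def by (rule continuous_on_compose2 [OF gc [OF that]]) (use \<Psi> in auto)
  have odd: "(g i \<circ> \<Psi>) (- x) = - (g i \<circ> \<Psi>) x" if "i < m" "x \<in> topspace (nsphere n)" for i x
    using godd [OF that(1) \<Psi> [OF that(2)]]
    by (simp add: \<Psi>_def frame_vec_uminus p_normalize_uminus)
  have "m \<le> n"
    using m n by simp
  then have "\<exists>x\<in>topspace (nsphere n). \<forall>i<m. (g i \<circ> \<Psi>) x = 0"
    using cont odd by (intro Borsuk_Ulam_nsphere [OF b]) auto
  then obtain x where "x \<in> topspace (nsphere n)" "\<forall>i<m. (g i \<circ> \<Psi>) x = 0" ..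
  then show False
    using gnz [OF \<Psi>] by auto
qed

lemma genus_support_sphere:
  fixes \<mu> :: "'v::finite \<Rightarrow> real"
  assumes "\<forall>i. \<mu> i > 0" "p > 0"
  shows "genus (support_sphere \<mu> p S) = card S"
  by (intro genus_eqI genus_le_support_sphere not_genus_le_support_sphere assms)

lemma support_sphere_in_genus_family:
  fixes \<mu> :: "'v::finite \<Rightarrow> real"
  assumes "\<forall>i. \<mu> i > 0" "p > 0"
  shows "support_sphere \<mu> p S \<in> genus_family \<mu> p (card S)"
proof -
  have "support_sphere \<mu> p S = sphere_p \<mu> p \<inter> (\<Inter>i\<in>- S. {f. f $ i = 0})"
    by (auto simp: support_sphere_def)
  moreover have "closed (sphere_p \<mu> p \<inter> (\<Inter>i\<in>- S. {f. f $ i = 0}))"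
    by (intro closed_Int closed_INT ballI closed_sphere_p [OF assms(2)] closed_Collect_eq
        continuous_on_component continuous_on_id continuous_on_const)
  ultimately have "closed (support_sphere \<mu> p S)"
    by simp
  then show ?thesis
    using genus_support_sphere [OF assms]
    by (auto simp: genus_family_def support_sphere_def sphere_p_def)
qed

section \<open>Bounds for the variational eigenvalues\<close>

definition potential_bound :: "('v::finite \<Rightarrow> real) \<Rightarrow> ('v \<Rightarrow> real) \<Rightarrow> real" where
  "potential_bound \<mu> \<kappa> = (\<Sum>i\<in>UNIV. \<bar>\<kappa> i\<bar> / \<mu> i)"

definition edge_bound :: "('v::finite \<Rightarrow> 'v \<Rightarrow> bool) \<Rightarrow> ('v \<Rightarrow> 'v \<Rightarrow> real) \<Rightarrow> ('v \<Rightarrow> real) \<Rightarrow> real" where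
  "edge_bound adj w \<mu> = (1/2) * (\<Sum>(i,j)\<in>{(i,j). adj i j}. w i j * (1 / \<mu> i + 1 / \<mu> j))"

lemma abs_powr_le_sphere_p:
  assumes "\<forall>i. \<mu> i > 0" "f \<in> sphere_p \<mu> p"
  shows "\<bar>f$i\<bar> powr p \<le> 1 / \<mu> i"
proof -
  have "\<mu> i * \<bar>f$i\<bar> powr p \<le> (\<Sum>j\<in>UNIV. \<mu> j * \<bar>f$j\<bar> powr p)"
    using assms(1) by (intro member_le_sum) (auto simp: less_imp_le)
  then show ?thesis
    using assms by (simp add: sphere_p_def field_simps mult.commute)
qed

lemma abs_potential_le:
  assumes "\<forall>i. \<mu> i > 0" "f \<in> sphere_p \<mu> p"
  shows "\<bar>\<Sum>i\<in>UNIV. \<kappa> i * \<bar>f$i\<bar> powr p\<bar> \<le> potential_bound \<mu> \<kappa>"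
proof -
  have "\<bar>\<Sum>i\<in>UNIV. \<kappa> i * \<bar>f$i\<bar> powr p\<bar> \<le> (\<Sum>i\<in>UNIV. \<bar>\<kappa> i\<bar> * \<bar>f$i\<bar> powr p)"
    using sum_abs [of "\<lambda>i. \<kappa> i * \<bar>f$i\<bar> powr p" UNIV] by (simp add: abs_mult)
  also have "\<dots> \<le> (\<Sum>i\<in>UNIV. \<bar>\<kappa> i\<bar> * (1 / \<mu> i))"
    using abs_powr_le_sphere_p [OF assms] by (intro sum_mono mult_left_mono) auto
  finally show ?thesis
    by (simp add: potential_bound_def)
qed

lemma rayleigh_on_sphere_p:
  "f \<in> sphere_p \<mu> p \<Longrightarrow> rayleigh adj \<sigma> w \<mu> \<kappa> p f =
     (1/2) * (\<Sum>(i,j)\<in>{(i,j). adj i j}. w i j * \<bar>f$i - \<sigma> i j * f$j\<bar> powr p)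
       + (\<Sum>i\<in>UNIV. \<kappa> i * \<bar>f$i\<bar> powr p)"
  by (simp add: rayleigh_def sphere_p_def)

lemma rayleigh_ge:
  assumes "is_edge_weight adj w" "\<forall>i. \<mu> i > 0" "f \<in> sphere_p \<mu> p"
  shows "- potential_bound \<mu> \<kappa> \<le> rayleigh adj \<sigma> w \<mu> \<kappa> p f"
proof -
  have "0 \<le> (\<Sum>(i,j)\<in>{(i,j). adj i j}. w i j * \<bar>f$i - \<sigma> i j * f$j\<bar> powr p)"
    using assms(1) by (intro sum_nonneg) (auto simp: is_edge_weight_def less_imp_le)
  then show ?thesis
    unfolding rayleigh_on_sphere_p [OF assms(3)] using abs_potential_le [OF assms(2,3), of \<kappa>]
    by linarith
qed

text \<open>The constant c = 2 powr p works for every f; c = 1 works for f supported on an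
  independent set.\<close>
lemma rayleigh_le:
  assumes "is_edge_weight adj w" "\<forall>i. \<mu> i > 0" "f \<in> sphere_p \<mu> p" "c \<ge> 0"
    and edge: "\<And>i j. adj i j \<Longrightarrow> \<bar>f$i - \<sigma> i j * f$j\<bar> powr p \<le> c * (\<bar>f$i\<bar> powr p + \<bar>f$j\<bar> powr p)"
  shows "rayleigh adj \<sigma> w \<mu> \<kappa> p f \<le> c * edge_bound adj w \<mu> + potential_bound \<mu> \<kappa>"
proof -
  have "(\<Sum>(i,j)\<in>{(i,j). adj i j}. w i j * \<bar>f$i - \<sigma> i j * f$j\<bar> powr p)
      \<le> (\<Sum>(i,j)\<in>{(i,j). adj i j}. c * (w i j * (1 / \<mu> i + 1 / \<mu> j)))"
  proof (rule sum_mono, clarify)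
    fix i j assume ij: "adj i j"
    have "\<bar>f$i - \<sigma> i j * f$j\<bar> powr p \<le> c * (1 / \<mu> i + 1 / \<mu> j)"
      using edge [OF ij] abs_powr_le_sphere_p [OF assms(2,3)] assms(4)
      by (meson add_mono mult_left_mono order_trans)
    then show "w i j * \<bar>f$i - \<sigma> i j * f$j\<bar> powr p \<le> c * (w i j * (1 / \<mu> i + 1 / \<mu> j))"
      using assms(1) ij by (simp add: is_edge_weight_def mult.left_commute mult_left_mono)
  qed
  then show ?thesis
    unfolding rayleigh_on_sphere_p [OF assms(3)] using abs_potential_le [OF assms(2,3), of \<kappa>]
    by (simp add: edge_bound_def sum_distrib_left [symmetric] case_prod_unfold)
qed

lemma abs_diff_signed_powr_le:
  fixes a b s p :: real
  assumes "\<bar>s\<bar> = 1" "p \<ge> 0"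
  shows "\<bar>a - s * b\<bar> powr p \<le> 2 powr p * (\<bar>a\<bar> powr p + \<bar>b\<bar> powr p)"
proof -
  have "\<bar>a - s * b\<bar> \<le> 2 * max \<bar>a\<bar> \<bar>b\<bar>"
    using abs_triangle_ineq4 [of a "s * b"] assms(1) by (simp add: abs_mult)
  then have "\<bar>a - s * b\<bar> powr p \<le> 2 powr p * max \<bar>a\<bar> \<bar>b\<bar> powr p"
    using assms(2) by (metis abs_ge_zero powr_mono2 powr_mult max_def order_trans zero_le_numeral)
  also have "\<dots> \<le> 2 powr p * (\<bar>a\<bar> powr p + \<bar>b\<bar> powr p)"
    by (intro mult_left_mono) (auto simp: max_def)
  finally show ?thesis .
qed

lemma genus_empty: "genus {} = 0"
  unfolding genus_def by (rule Least_eq_0) (simp add: genus_le_def)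

lemma independent_support_edge_powr_le:
  fixes f :: "real^'v"
  assumes "independent_set adj S" "\<forall>i. i \<notin> S \<longrightarrow> f$i = 0" "adj i j" "\<bar>s\<bar> = 1"
  shows "\<bar>f$i - s * f$j\<bar> powr p \<le> 1 * (\<bar>f$i\<bar> powr p + \<bar>f$j\<bar> powr p)"
proof (cases "i \<in> S")
  case True
  then have "f$j = 0"
    using assms(1-3) by (auto simp: independent_set_def)
  then show ?thesis
    by (simp add: powr_def)
next
  case False
  then show ?thesis
    using assms(2,4) by (simp add: abs_mult)
qed

lemma abs_signature: "is_signature adj \<sigma> \<Longrightarrow> adj i j \<Longrightarrow> \<bar>\<sigma> i j\<bar> = 1"
  unfolding is_signature_def by (metis abs_1 abs_minus_cancel)

lemma Sup_rayleigh_ge: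
  assumes sig: "is_signature adj \<sigma>" and w: "is_edge_weight adj w" and \<mu>: "\<forall>i. \<mu> i > 0"
    and p: "p > 0" and B: "B \<subseteq> sphere_p \<mu> p" "B \<noteq> {}"
  shows "- potential_bound \<mu> \<kappa> \<le> Sup (rayleigh adj \<sigma> w \<mu> \<kappa> p ` B)"
proof -
  obtain f where f: "f \<in> B"
    using B(2) by auto
  have "bdd_above (rayleigh adj \<sigma> w \<mu> \<kappa> p ` B)"
    using B(1) p abs_signature [OF sig]
    by (intro bdd_aboveI2 [where M = "2 powr p * edge_bound adj w \<mu> + potential_bound \<mu> \<kappa>"]
        rayleigh_le [OF w \<mu>] abs_diff_signed_powr_le) auto
  then show ?thesis
    using f B(1) rayleigh_ge [OF w \<mu>] by (meson cSup_upper imageI order_trans subsetD)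
qed

lemma Sup_rayleigh_support_sphere_le:
  assumes sig: "is_signature adj \<sigma>" and w: "is_edge_weight adj w" and \<mu>: "\<forall>i. \<mu> i > 0"
    and S: "independent_set adj S" "support_sphere \<mu> p S \<noteq> {}"
  shows "Sup (rayleigh adj \<sigma> w \<mu> \<kappa> p ` support_sphere \<mu> p S)
    \<le> edge_bound adj w \<mu> + potential_bound \<mu> \<kappa>"
proof (rule cSup_least)
  fix r assume "r \<in> rayleigh adj \<sigma> w \<mu> \<kappa> p ` support_sphere \<mu> p S"
  then obtain f where f: "f \<in> support_sphere \<mu> p S" "r = rayleigh adj \<sigma> w \<mu> \<kappa> p f"
    by auto
  have "rayleigh adj \<sigma> w \<mu> \<kappa> p f \<le> 1 * edge_bound adj w \<mu> + potential_bound \<mu> \<kappa>"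
    using f(1) abs_signature [OF sig]
    by (intro rayleigh_le [OF w \<mu>] independent_support_edge_powr_le [OF S(1)])
      (auto simp: support_sphere_def)
  then show "r \<le> edge_bound adj w \<mu> + potential_bound \<mu> \<kappa>"
    using f(2) by simp
qed (use S(2) in simp)

lemma var_eig_bounds:
  assumes sig: "is_signature adj \<sigma>" and w: "is_edge_weight adj w" and \<mu>: "\<forall>i. \<mu> i > 0"
    and p: "p > 0" and S: "independent_set adj S" "card S = k" "1 \<le> k"
  shows "- potential_bound \<mu> \<kappa> \<le> var_eig adj \<sigma> w \<mu> \<kappa> p k"
    and "var_eig adj \<sigma> w \<mu> \<kappa> p k \<le> edge_bound adj w \<mu> + potential_bound \<mu> \<kappa>"
proof -
  let ?V = "(\<lambda>B. Sup (rayleigh adj \<sigma> w \<mu> \<kappa> p ` B)) ` genus_family \<mu> p k"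
  have lower: "- potential_bound \<mu> \<kappa> \<le> Sup (rayleigh adj \<sigma> w \<mu> \<kappa> p ` B)"
    if "B \<in> genus_family \<mu> p k" for B
    using that S(3)
    by (intro Sup_rayleigh_ge [OF sig w \<mu> p]) (auto simp: genus_family_def genus_empty)
  have supp: "support_sphere \<mu> p S \<in> genus_family \<mu> p k"
    using support_sphere_in_genus_family [OF \<mu> p, of S] S(2) by simp
  then have "support_sphere \<mu> p S \<noteq> {}"
    using S(3) by (auto simp: genus_family_def genus_empty)
  then have "Sup (rayleigh adj \<sigma> w \<mu> \<kappa> p ` support_sphere \<mu> p S)
      \<le> edge_bound adj w \<mu> + potential_bound \<mu> \<kappa>"
    by (rule Sup_rayleigh_support_sphere_le [OF sig w \<mu> S(1)])
  moreover have "Inf ?V \<le> Sup (rayleigh adj \<sigma> w \<mu> \<kappa> p ` support_sphere \<mu> p S)"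
    using supp lower by (intro cInf_lower bdd_belowI2) auto
  ultimately show "var_eig adj \<sigma> w \<mu> \<kappa> p k \<le> edge_bound adj w \<mu> + potential_bound \<mu> \<kappa>"
    by (simp add: var_eig_def)
  show "- potential_bound \<mu> \<kappa> \<le> var_eig adj \<sigma> w \<mu> \<kappa> p k"
    unfolding var_eig_def using supp lower by (intro cInf_greatest) auto
qed

lemma Lim_2_powr_neg_mult_bounded:
  fixes v :: "real \<Rightarrow> real"
  assumes "\<And>p. p \<ge> 1 \<Longrightarrow> \<bar>v p\<bar> \<le> C"
  shows "Lim at_top (\<lambda>p. 2 powr (-p) * v p) = 0"
proof (rule tendsto_Lim)
  have "((\<lambda>p::real. 2 powr (-p)) \<longlongrightarrow> 0) at_top"
    by real_asymp
  moreover have "\<forall>\<^sub>F p in at_top. norm (v p) \<le> C"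
    using eventually_ge_at_top [of 1] by eventually_elim (simp add: assms)
  ultimately show "((\<lambda>p. 2 powr (-p) * v p) \<longlongrightarrow> 0) at_top"
    by (rule lim_null_mult_right_bounded)
qed simp

lemma cutoff_eig_eq_0_if_independent:
  assumes "is_signature adj \<sigma>" "is_edge_weight adj w" "\<forall>i. \<mu> i > 0"
    and "independent_set adj S" "card S = k" "1 \<le> k"
  shows "cutoff_eig adj \<sigma> w \<mu> \<kappa> k = 0"
  unfolding cutoff_eig_def
proof (rule Lim_2_powr_neg_mult_bounded)
  fix p :: real assume "p \<ge> 1"
  then show "\<bar>var_eig adj \<sigma> w \<mu> \<kappa> p k\<bar>
      \<le> \<bar>edge_bound adj w \<mu> + potential_bound \<mu> \<kappa>\<bar> + \<bar>potential_bound \<mu> \<kappa>\<bar>"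
    using var_eig_bounds [OF assms(1-3) _ assms(4-6), of p \<kappa>]
      abs_ge_self [of "edge_bound adj w \<mu> + potential_bound \<mu> \<kappa>"]
      abs_ge_minus_self [of "potential_bound \<mu> \<kappa>"]
    unfolding abs_le_iff by linarith
qed

lemma obtain_maximum_independent_set:
  fixes adj :: "'v::finite \<Rightarrow> 'v \<Rightarrow> bool"
  obtains S where "independent_set adj S" "card S = independence_number adj"
proof -
  have "card ` {S. independent_set adj S} \<noteq> {}"
    using independent_set_def [of adj "{}"] by auto
  then have "independence_number adj \<in> card ` {S. independent_set adj S}"
    unfolding independence_number_def by (rule Max_in [OF finite_imageI [OF finite]])
  then show thesis
    using that by (auto simp: image_iff)
qed

lemma independence_number_le_card: "independence_number (adj :: 'v::finite \<Rightarrow> 'v \<Rightarrow> bool) \<le> CARD('v)"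
  by (metis obtain_maximum_independent_set card_mono finite subset_UNIV)

lemma cutoff_eig_eq_0_upto_independence_number:
  fixes adj :: "'v::finite \<Rightarrow> 'v \<Rightarrow> bool"
  assumes "is_signature adj \<sigma>" "is_edge_weight adj w" "\<forall>i. \<mu> i > 0"
    and k: "k \<in> {1..independence_number adj}"
  shows "cutoff_eig adj \<sigma> w \<mu> \<kappa> k = 0"
proof -
  obtain S where S: "independent_set adj S" "card S = independence_number adj"
    by (rule obtain_maximum_independent_set)
  then obtain T where T: "T \<subseteq> S" "card T = k"
    using obtain_subset_with_card_n [of k S] k by auto
  then have "independent_set adj T"
    using S(1) by (auto simp: independent_set_def)
  then show ?thesis
    using cutoff_eig_eq_0_if_independent [OF assms(1-3)] T(2) k by simp
qed

theorem theorem6p2: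
  fixes adj :: "'v::finite \<Rightarrow> 'v \<Rightarrow> bool"
    and w :: "'v \<Rightarrow> 'v \<Rightarrow> real"
    and \<mu> \<kappa> :: "'v \<Rightarrow> real"
  assumes "simple_graph adj"
    and "is_edge_weight adj w"
    and "\<forall>i. \<mu> i > 0"
  shows "independence_number adj \<le>
    Min {card {k \<in> {1..CARD('v)}. cutoff_eig adj \<sigma> w \<mu> \<kappa> k = 0} | \<sigma>. is_signature adj \<sigma>}"
proof -
  let ?Z = "\<lambda>\<sigma>. {k \<in> {1..CARD('v)}. cutoff_eig adj \<sigma> w \<mu> \<kappa> k = 0}"
  have "{1..independence_number adj} \<subseteq> ?Z \<sigma>" if "is_signature adj \<sigma>" for \<sigma>
    using cutoff_eig_eq_0_upto_independence_number [OF that assms(2,3)]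
      independence_number_le_card [of adj] by auto
  then have le: "independence_number adj \<le> card (?Z \<sigma>)" if "is_signature adj \<sigma>" for \<sigma>
    using card_mono [of "?Z \<sigma>" "{1..independence_number adj}"] that by simp
  have "{card (?Z \<sigma>) | \<sigma>. is_signature adj \<sigma>} \<subseteq> card ` Pow {1..CARD('v)}"
    by blast
  then have "finite {card (?Z \<sigma>) | \<sigma>. is_signature adj \<sigma>}"
    by (rule finite_subset) simp
  moreover have "is_signature adj (\<lambda>i j. 1)"
    by (simp add: is_signature_def)
  ultimately show ?thesis
    using le by (subst Min_ge_iff) auto
qed

end
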